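(* Let $\mathcal{P}$ be the powerset monad (unit $x\mapsto\{x\}$, multiplication union), $\mathcal{V}=[0,1]_\oplus$ and $\mathit{ev}_{\mathcal{P}}=\sup\colon\mathcal{P}[0,1]\to[0,1]$ (with $\sup\emptyset=0$). For sets $X_1,X_2$ define $g_{X_1,X_2}\colon\mathcal{P}(X_1+X_2)\to\mathcal{P}X_1+\mathcal{P}X_2$ by $g_{X_1,X_2}(X')=X'\cap X_1$ (in the left summand) if $X'\cap X_1\neq\emptyset$, and $g_{X_1,X_2}(X')=X'$ (in the right summand, as then $X'\subseteq X_2$) otherwise. Then $g$ is a natural transformation that is compatible with the unit and the multiplication of $\mathcal{P}$ and is well-behaved with respect to $\sup$.
   Context: $[0,1]_\oplus$ is the quantale on $[0,1]$ with the reversed order ($a\sqsubseteq b$ iff $a\ge b$) and truncated addition $a\oplus b=\min(a+b,1)$; hence its top element is $\top=0$ and its bottom is $\bot=1$. For a monad $(T,\eta,\mu)$, a natural transformation $g\colon T((-)+(-))\Rightarrow T(-)+T(-)$ is compatible with the unit if $g_{Y_1,Y_2}\circ\eta_{Y_1+Y_2}=\eta_{Y_1}+\eta_{Y_2}$, and with the multiplication if $g_{Y_1,Y_2}\circ\mu_{Y_1+Y_2}=(\mu_{Y_1}+\mu_{Y_2})\circ g_{TY_1,TY_2}\circ Tg_{Y_1,Y_2}$, for all sets $Y_1,Y_2$. It is well-behaved with respect to $\mathit{ev}_T\colon T\mathcal{V}\to\mathcal{V}$ if for all sets $X_1,X_2$ and maps $f_i\colon X_i\to\mathcal{V}$: $\mathit{ev}_T\circ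 T[f_1,\top_{X_2}]=[\mathit{ev}_T\circ Tf_1,\top_{TX_2}]\circ g_{X_1,X_2}$, $\mathit{ev}_T\circ T[\bot_{X_1},f_2]=[\bot_{TX_1},\mathit{ev}_T\circ Tf_2]\circ g_{X_1,X_2}$, and $\mathit{ev}_T\circ T[\bot_{X_1},\top_{X_2}]=[\bot_{TX_1},\top_{TX_2}]\circ g_{X_1,X_2}$, where $\top_Z,\bot_Z$ are constant maps on $Z$ with values $\top,\bot$ of the quantale. *)

theory Defs
  imports Main "HOL.Real"
begin

text \<open>The quantale V = [0,1] with reversed order and truncated addition.
  Elements are represented as reals in {0..1}; the top element (w.r.t. the
  reversed order) is 0, the bottom element is 1.\<close>

definition topV :: real where "topV = 0"
definition botV :: real where "botV = 1"

definition etaP :: "'a \<Rightarrow> 'a set" where "etaP x = {x}"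
definition muP :: "'a set set \<Rightarrow> 'a set" where "muP XX = \<Union> XX"

definition evP :: "real set \<Rightarrow> real" where
  "evP A = (if A = {} then 0 else Sup A)"

definition gP :: "('a + 'b) set \<Rightarrow> 'a set + 'b set" where
  "gP X' = (if {x. Inl x \<in> X'} \<noteq> {} then Inl {x. Inl x \<in> X'}
            else Inr {y. Inr y \<in> X'})"

end

theory Submission
  imports Defs
begin

text \<open>Everything is read off the left and right parts \<open>Inl -` X'\<close> and \<open>Inr -` X'\<close> of
  \<open>X'\<close>: images under \<open>map_sum\<close> and unions act on them componentwise, and a union has a
  nonempty left part iff one of its members does. For the supremum, the value \<open>\<top> = 0\<close>
  never changes the supremum of values in \<open>[0,1]\<close>, whereas the value \<open>\<bottom> = 1\<close> forces it
  to be \<open>1\<close>; this is why \<open>g\<close> may discard the right part as soon as the left one is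
  nonempty.\<close>

lemma vimage_Inl_image_map_sum: "Inl -` (map_sum f g ` X) = f ` (Inl -` X)"
proof (intro set_eqI iffI)
  fix x assume "x \<in> Inl -` (map_sum f g ` X)"
  then obtain z where "z \<in> X" "Inl x = map_sum f g z" by auto
  then show "x \<in> f ` (Inl -` X)" by (cases z) auto
qed force

lemma vimage_Inr_image_map_sum: "Inr -` (map_sum f g ` X) = g ` (Inr -` X)"
proof (intro set_eqI iffI)
  fix y assume "y \<in> Inr -` (map_sum f g ` X)"
  then obtain z where "z \<in> X" "Inr y = map_sum f g z" by auto
  then show "y \<in> g ` (Inr -` X)" by (cases z) auto
qed force

lemma image_case_sum: "case_sum f g ` X = f ` (Inl -` X) \<union> g ` (Inr -` X)"
  by (force split: sum.split)

lemma gP_eq: "gP X = (if Inl -` X \<noteq> {} then Inl (Inl -` X) else Inr (Inr -` X))"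
  by (simp add: gP_def vimage_def)

lemma gP_map_sum: "gP (map_sum f g ` X) = map_sum (image f) (image g) (gP X)"
  by (simp add: gP_eq vimage_Inl_image_map_sum vimage_Inr_image_map_sum)

lemma gP_etaP: "gP (etaP z) = map_sum etaP etaP z"
  by (cases z) (auto simp: gP_eq etaP_def)

lemma vimage_Inl_image_gP: "Inl -` (gP ` XX) = vimage Inl ` {X \<in> XX. Inl -` X \<noteq> {}}"
proof (intro set_eqI iffI)
  fix A assume "A \<in> Inl -` (gP ` XX)"
  then obtain X where "X \<in> XX" and "gP X = Inl A" by auto
  then show "A \<in> vimage Inl ` {X \<in> XX. Inl -` X \<noteq> {}}"
    by (auto simp: gP_eq split: if_splits)
qed (auto simp: gP_eq)

lemma vimage_Inr_image_gP: "Inr -` (gP ` XX) = vimage Inr ` {X \<in> XX. Inl -` X = {}}"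
proof (intro set_eqI iffI)
  fix B assume "B \<in> Inr -` (gP ` XX)"
  then obtain X where "X \<in> XX" and "gP X = Inr B" by auto
  then show "B \<in> vimage Inr ` {X \<in> XX. Inl -` X = {}}"
    by (auto simp: gP_eq split: if_splits)
qed (auto simp: gP_eq)

lemma gP_muP: "gP (muP XX) = map_sum muP muP (gP (gP ` XX))"
proof (cases "\<exists>X\<in>XX. Inl -` X \<noteq> {}")
  case True
  then have "Inl -` (gP ` XX) \<noteq> {}" and "Inl -` \<Union>XX \<noteq> {}"
    by (auto simp: vimage_Inl_image_gP)
  moreover have "\<Union>(Inl -` (gP ` XX)) = Inl -` \<Union>XX"
    by (auto simp: vimage_Inl_image_gP)
  ultimately show ?thesis by (simp add: gP_eq muP_def)
next
  case False
  then have "Inl -` (gP ` XX) = {}" and "Inl -` \<Union>XX = {}"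
    by (auto simp: vimage_Inl_image_gP)
  moreover have "\<Union>(Inr -` (gP ` XX)) = Inr -` \<Union>XX"
    using False by (auto simp: vimage_Inr_image_gP)
  ultimately show ?thesis by (simp add: gP_eq muP_def)
qed

lemma evP_Un_zero:
  assumes "S \<subseteq> {0..1}" and "Z \<subseteq> {0}"
  shows "evP (S \<union> Z) = evP S"
proof -
  from assms(2) have "Z = {} \<or> Z = {0}" by blast
  then consider "S \<union> Z = S" | "S \<union> Z = insert 0 S" by blast
  then show ?thesis
  proof cases
    case 2
    show ?thesis
    proof (cases "S = {}")
      case True
      with 2 show ?thesis by (simp add: evP_def)
    next
      case False
      have bdd: "bdd_above S"
        by (rule bdd_above_mono[OF bdd_above_Icc assms(1)])
      obtain s where "s \<in> S" using False by blast
      with assms(1) bdd have "0 \<le> Sup S"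
        by (meson atLeastAtMost_iff cSup_upper order_trans subsetD)
      then have "Sup (insert 0 S) = Sup S"
        by (simp add: cSup_insert[OF False bdd] sup_absorb2)
      with 2 False show ?thesis by (simp add: evP_def)
    qed
  qed simp
qed

lemma evP_eq_one:
  assumes "1 \<in> S" and "S \<subseteq> {..1}"
  shows "evP S = 1"
proof -
  have "Sup S = 1" using assms by (intro cSup_eq_maximum) auto
  with assms(1) show ?thesis by (auto simp: evP_def)
qed

lemma evP_image_case_sum_top:
  assumes "\<And>x. f x \<in> {0..1}"
  shows "evP (case_sum f (\<lambda>_. topV) ` X) = case_sum (\<lambda>A. evP (f ` A)) (\<lambda>_. topV) (gP X)"
proof -
  have "evP (case_sum f (\<lambda>_. topV) ` X) = evP (f ` (Inl -` X))"
    unfolding image_case_sum using assms by (intro evP_Un_zero) (auto simp: topV_def)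
  also have "\<dots> = case_sum (\<lambda>A. evP (f ` A)) (\<lambda>_. topV) (gP X)"
    by (simp add: gP_eq evP_def topV_def)
  finally show ?thesis .
qed

lemma evP_image_case_sum_bot:
  assumes "\<And>y. g y \<in> {0..1}"
  shows "evP (case_sum (\<lambda>_. botV) g ` X) = case_sum (\<lambda>_. botV) (\<lambda>B. evP (g ` B)) (gP X)"
proof (cases "Inl -` X = {}")
  case True
  then have "case_sum (\<lambda>_. botV) g ` X = g ` (Inr -` X)"
    by (simp add: image_case_sum)
  with True show ?thesis by (simp add: gP_eq)
next
  case False
  then have "evP (case_sum (\<lambda>_. botV) g ` X) = 1"
    using assms by (intro evP_eq_one) (auto simp: image_case_sum botV_def)
  with False show ?thesis by (simp add: gP_eq botV_def)
qed

lemma evP_image_case_sum_bot_top: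
  "evP (case_sum (\<lambda>_. botV) (\<lambda>_. topV) ` X) = case_sum (\<lambda>_. botV) (\<lambda>_. topV) (gP X)"
proof -
  have "evP (case_sum (\<lambda>_. botV) (\<lambda>_. topV) ` X)
      = case_sum (\<lambda>_. botV) (\<lambda>B. evP ((\<lambda>_. topV) ` B)) (gP X)"
    by (rule evP_image_case_sum_bot) (simp add: topV_def)
  moreover have "evP ((\<lambda>_. topV) ` B) = topV" for B :: "'b set"
    using evP_Un_zero[of "{}" "(\<lambda>_. topV) ` B"] by (simp add: evP_def topV_def)
  ultimately show ?thesis by (cases "gP X") simp_all
qed

theorem mainTheorem12:
  shows
    \<comment> \<open>naturality\<close>
    "(\<forall>(f1 :: 'a \<Rightarrow> 'c) (f2 :: 'b \<Rightarrow> 'd) (X' :: ('a + 'b) set).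
        gP (map_sum f1 f2 ` X') = map_sum (image f1) (image f2) (gP X'))
   \<comment> \<open>compatibility with the unit\<close>
   \<and> (\<forall>z :: 'a + 'b. gP (etaP z) = map_sum etaP etaP z)
   \<comment> \<open>compatibility with the multiplication\<close>
   \<and> (\<forall>XX :: ('a + 'b) set set.
        gP (muP XX) = map_sum muP muP (gP (image gP XX)))
   \<comment> \<open>well-behavedness with respect to ev_P = sup\<close>
   \<and> (\<forall>(f1 :: 'a \<Rightarrow> real) (f2 :: 'b \<Rightarrow> real).
        (\<forall>x. f1 x \<in> {0..1}) \<longrightarrow> (\<forall>y. f2 y \<in> {0..1}) \<longrightarrow>
        (\<forall>X' :: ('a + 'b) set.
           evP (case_sum f1 (\<lambda>_. topV) ` X')
             = case_sum (\<lambda>A. evP (f1 ` A)) (\<lambda>_. topV) (gP X')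
         \<and> evP (case_sum (\<lambda>_. botV) f2 ` X')
             = case_sum (\<lambda>_. botV) (\<lambda>B. evP (f2 ` B)) (gP X')
         \<and> evP (case_sum (\<lambda>_. botV) (\<lambda>_. topV) ` X')
             = case_sum (\<lambda>_. botV) (\<lambda>_. topV) (gP X')))"
  by (intro conjI allI impI; rule gP_map_sum gP_etaP gP_muP evP_image_case_sum_bot_top
      evP_image_case_sum_top evP_image_case_sum_bot; blast)

end
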